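(* Let $A$ be a commutative ring and $L$ a finitely generated projective $A$-module of constant rank $1$. If $L_1,\dots,L_n$ are finitely many $A$-submodules of $L$ with $L=\bigcup_{k=1}^n L_k$, then $L=L_k$ for some $k$. *)

theory Defs
  imports Main "HOL.Modules"
begin

text \<open>Modules over a commutative ring A (type class comm_ring_1) are modelled with the
HOL locale module (from Modules.thy): the module is the type 'b, with scalar multiplication
scale.\<close>

definition prime_ideal :: "'a::comm_ring_1 set \<Rightarrow> bool" where
  "prime_ideal P \<longleftrightarrow>
     0 \<in> P \<and> (\<forall>x\<in>P. \<forall>y\<in>P. x + y \<in> P) \<and> (\<forall>a x. x \<in> P \<longrightarrow> a * x \<in> P)
     \<and> 1 \<notin> P \<and> (\<forall>a b. a * b \<in> P \<longrightarrow> a \<in> P \<or> b \<in> P)"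

text \<open>Finitely generated projective: a direct summand (retract) of a finite free module A^n.
A^n is represented by the functions v :: nat => 'a with v i = 0 for i >= n; f : L -> A^n and
g : A^n -> L are A-linear with g o f = id.\<close>

definition fg_projective :: "('a::comm_ring_1 \<Rightarrow> 'b::ab_group_add \<Rightarrow> 'b) \<Rightarrow> bool" where
  "fg_projective scale \<longleftrightarrow>
     (\<exists>(n::nat) (f::'b \<Rightarrow> nat \<Rightarrow> 'a) (g::(nat \<Rightarrow> 'a) \<Rightarrow> 'b).
        (\<forall>x. \<forall>i\<ge>n. f x i = 0) \<and>
        (\<forall>x y. f (x + y) = (\<lambda>i. f x i + f y i)) \<and>
        (\<forall>c x. f (scale c x) = (\<lambda>i. c * f x i)) \<and>
        (\<forall>v w. (\<forall>i\<ge>n. v i = 0) \<longrightarrow> (\<forall>i\<ge>n. w i = 0) \<longrightarrow>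
                g (\<lambda>i. v i + w i) = g v + g w) \<and>
        (\<forall>c v. (\<forall>i\<ge>n. v i = 0) \<longrightarrow> g (\<lambda>i. c * v i) = scale c (g v)) \<and>
        (\<forall>x. g (f x) = x))"

text \<open>The localization L_P is free of rank 1 over A_P, written out in elements:
there is x in L such that x/1 is a basis of L_P, i.e. the A_P-linear map A_P -> L_P,
a/u |-> a x/u, is injective (a x/u = 0 in L_P implies a/u = 0 in A_P) and surjective
(every y/t in L_P equals some (a/u) (x/1)).  Any basis element y/t may be replaced by y/1,
since t is a unit in A_P, so this is exactly freeness of rank 1.\<close>

definition localization_free_rank1 ::
  "('a::comm_ring_1 \<Rightarrow> 'b::ab_group_add \<Rightarrow> 'b) \<Rightarrow> 'a set \<Rightarrow> bool" where
  "localization_free_rank1 scale P \<longleftrightarrow>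
     (\<exists>x::'b.
        (\<forall>a::'a. (\<exists>s. s \<notin> P \<and> scale s (scale a x) = 0) \<longrightarrow> (\<exists>s. s \<notin> P \<and> s * a = 0)) \<and>
        (\<forall>(y::'b) (t::'a). t \<notin> P \<longrightarrow>
           (\<exists>a u s. u \<notin> P \<and> s \<notin> P \<and> scale s (scale u y - scale t (scale a x)) = 0)))"

definition constant_rank_one :: "('a::comm_ring_1 \<Rightarrow> 'b::ab_group_add \<Rightarrow> 'b) \<Rightarrow> bool" where
  "constant_rank_one scale \<longleftrightarrow> (\<forall>P. prime_ideal P \<longrightarrow> localization_free_rank1 scale P)"

end

theory Submission
  imports Defs
begin

text \<open>Suppose no \<open>L\<^sub>k\<close> is all of \<open>L\<close> and pick \<open>y\<^sub>k \<notin> L\<^sub>k\<close>. The colon ideal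
\<open>(L\<^sub>k : y\<^sub>k)\<close> is proper, hence contained in a prime \<open>Q\<^sub>k\<close>; let \<open>P\<^sub>1, \<dots>, P\<^sub>m\<close> be the maximal
members of \<open>{Q\<^sub>1, \<dots>, Q\<^sub>n}\<close>. Each \<open>L\<^bsub>P\<^sub>i\<^esub>\<close> is generated by some \<open>x\<^sub>i/1\<close>, and as the \<open>P\<^sub>i\<close> are pairwise
incomparable primes there are \<open>e\<^sub>i \<notin> P\<^sub>i\<close> lying in every \<open>P\<^sub>j\<close>, \<open>j \<noteq> i\<close>. Then \<open>z = \<Sum> e\<^sub>i x\<^sub>i\<close> is a unit times
\<open>x\<^sub>i\<close> modulo \<open>P\<^sub>i L\<^bsub>P\<^sub>i\<^esub>\<close>, so \<open>z/1\<close> generates every \<open>L\<^bsub>P\<^sub>i\<^esub>\<close>. But \<open>z\<close> lies in some \<open>L\<^sub>k\<close>;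
taking \<open>Q\<^sub>k \<subseteq> P\<^sub>i\<close> we get \<open>t y\<^sub>k \<in> L\<^sub>k\<close> for some \<open>t \<notin> P\<^sub>i\<close>, contradicting
\<open>(L\<^sub>k : y\<^sub>k) \<subseteq> P\<^sub>i\<close>.\<close>

definition ideal :: "'a::comm_ring_1 set \<Rightarrow> bool" where
  "ideal I \<longleftrightarrow> 0 \<in> I \<and> (\<forall>x\<in>I. \<forall>y\<in>I. x + y \<in> I) \<and> (\<forall>a x. x \<in> I \<longrightarrow> a * x \<in> I)"

lemma prime_ideal_iff:
  "prime_ideal P \<longleftrightarrow> ideal P \<and> 1 \<notin> P \<and> (\<forall>a b. a * b \<in> P \<longrightarrow> a \<in> P \<or> b \<in> P)"
  by (auto simp: prime_ideal_def ideal_def)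

lemma prime_ideal_imp_ideal: "prime_ideal P \<Longrightarrow> ideal P"
  by (simp add: prime_ideal_iff)

lemma ideal_add: "ideal I \<Longrightarrow> x \<in> I \<Longrightarrow> y \<in> I \<Longrightarrow> x + y \<in> I"
  by (simp add: ideal_def)

lemma ideal_mult_left: "ideal I \<Longrightarrow> x \<in> I \<Longrightarrow> a * x \<in> I"
  and ideal_mult_right: "ideal I \<Longrightarrow> x \<in> I \<Longrightarrow> x * a \<in> I"
  by (auto simp: ideal_def mult.commute)

lemma ideal_add_notin:
  assumes "ideal I" "t \<notin> I" "r \<in> I"
  shows "t + r \<notin> I"
proof
  assume "t + r \<in> I"
  moreover have "- r \<in> I" using ideal_mult_left[OF assms(1,3), of "- 1"] by simp
  ultimately have "(t + r) + - r \<in> I" using assms(1) unfolding ideal_def by blast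
  with assms(2) show False by simp
qed

lemma ideal_prod_mem:
  assumes "ideal I" "finite S" "q \<in> S" "f q \<in> I"
  shows "prod f S \<in> I"
  using assms by (simp add: prod.remove ideal_mult_right)

lemma prime_ideal_mult_notin:
  "prime_ideal P \<Longrightarrow> a \<notin> P \<Longrightarrow> b \<notin> P \<Longrightarrow> a * b \<notin> P"
  by (auto simp: prime_ideal_iff)

lemma prime_ideal_prod_notin:
  assumes "prime_ideal P" "finite S" "\<And>x. x \<in> S \<Longrightarrow> f x \<notin> P"
  shows "prod f S \<notin> P"
  using assms(2,3)
proof (induction S rule: finite_induct)
  case empty
  then show ?case using assms(1) by (simp add: prime_ideal_iff)
next
  case (insert x F)
  then show ?case using assms(1) by (simp add: prime_ideal_mult_notin)
qed

lemma Inter_not_subset_prime_ideal: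
  assumes "prime_ideal P" "finite S" "\<And>Q. Q \<in> S \<Longrightarrow> ideal Q \<and> \<not> Q \<subseteq> P"
  shows "\<not> \<Inter>S \<subseteq> P"
proof -
  have "\<forall>Q\<in>S. \<exists>q. q \<in> Q \<and> q \<notin> P" using assms(3) by blast
  then obtain q where q: "\<And>Q. Q \<in> S \<Longrightarrow> q Q \<in> Q \<and> q Q \<notin> P" by metis
  have "prod q S \<in> Q" if "Q \<in> S" for Q
    using ideal_prod_mem[of Q S Q q] q assms(2,3) that by blast
  moreover have "prod q S \<notin> P"
    using prime_ideal_prod_notin[OF assms(1,2)] q by blast
  ultimately show ?thesis by blast
qed

lemma ideal_add_principal:
  assumes "ideal I"
  shows "ideal {m + r * a | m r. m \<in> I}"
  unfolding ideal_def
proof (intro conjI ballI allI impI)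
  show "0 \<in> {m + r * a | m r. m \<in> I}"
    using assms by (auto simp: ideal_def intro!: exI[of _ 0])
next
  fix x y assume "x \<in> {m + r * a | m r. m \<in> I}" "y \<in> {m + r * a | m r. m \<in> I}"
  then obtain m1 r1 m2 r2 where "x = m1 + r1 * a" "y = m2 + r2 * a" "m1 \<in> I" "m2 \<in> I"
    by blast
  moreover have "m1 + m2 \<in> I" using assms \<open>m1 \<in> I\<close> \<open>m2 \<in> I\<close> by (simp add: ideal_def)
  ultimately have "x + y = (m1 + m2) + (r1 + r2) * a \<and> m1 + m2 \<in> I"
    by (simp add: algebra_simps)
  then show "x + y \<in> {m + r * a | m r. m \<in> I}" by blast
next
  fix b x assume "x \<in> {m + r * a | m r. m \<in> I}"
  then obtain m r where "x = m + r * a" "m \<in> I" by blast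
  then have "b * x = b * m + (b * r) * a \<and> b * m \<in> I"
    using assms by (simp add: algebra_simps ideal_mult_left)
  then show "b * x \<in> {m + r * a | m r. m \<in> I}" by blast
qed

lemma maximal_proper_ideal_is_prime:
  assumes M: "ideal M" "1 \<notin> M"
    and maximal: "\<And>J. ideal J \<Longrightarrow> M \<subseteq> J \<Longrightarrow> 1 \<notin> J \<Longrightarrow> J = M"
  shows "prime_ideal M"
proof -
  have invertible_mod_M: "\<exists>m\<in>M. \<exists>r. m + r * a = 1" if "a \<notin> M" for a
  proof (rule ccontr)
    define J where "J = {m + r * a | m r. m \<in> M}"
    assume "\<not> ?thesis"
    then have "1 \<notin> J" by (auto simp: J_def)
    moreover have "M \<subseteq> J"
    proof
      fix m assume "m \<in> M"
      then have "m = m + 0 * a \<and> m \<in> M" by simp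
      then show "m \<in> J" unfolding J_def by blast
    qed
    moreover have "ideal J" unfolding J_def by (rule ideal_add_principal[OF M(1)])
    ultimately have "J = M" using maximal by blast
    moreover have "a \<in> J"
    proof -
      have "a = 0 + 1 * a \<and> 0 \<in> M" using M(1) by (simp add: ideal_def)
      then show ?thesis unfolding J_def by blast
    qed
    ultimately show False using that by simp
  qed
  have "a \<in> M \<or> b \<in> M" if ab: "a * b \<in> M" for a b
  proof (rule ccontr)
    assume "\<not> (a \<in> M \<or> b \<in> M)"
    then obtain m1 r1 m2 r2 where m: "m1 \<in> M" "m2 \<in> M" and "m1 + r1 * a = 1" "m2 + r2 * b = 1"
      using invertible_mod_M by blast
    then have "1 = (m1 + r1 * a) * (m2 + r2 * b)" by simp
    also have "\<dots> = m1 * (m2 + r2 * b) + r1 * a * m2 + r1 * r2 * (a * b)"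
      by (simp add: algebra_simps)
    also have "\<dots> \<in> M"
      using ideal_mult_right[OF M(1) m(1)] ideal_mult_left[OF M(1) m(2)] ideal_mult_left[OF M(1) ab]
      by (intro ideal_add M(1))
    finally show False using M(2) by simp
  qed
  with M show ?thesis by (simp add: prime_ideal_iff)
qed

lemma ideal_Union_chain:
  assumes "\<C> \<noteq> {}" "\<And>J. J \<in> \<C> \<Longrightarrow> ideal J"
    and chain: "\<And>X Y. X \<in> \<C> \<Longrightarrow> Y \<in> \<C> \<Longrightarrow> X \<subseteq> Y \<or> Y \<subseteq> X"
  shows "ideal (\<Union>\<C>)"
  unfolding ideal_def
proof (intro conjI ballI allI impI)
  show "0 \<in> \<Union>\<C>" using assms(1,2) by (auto simp: ideal_def)
next
  fix x y assume "x \<in> \<Union>\<C>" "y \<in> \<Union>\<C>"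
  then obtain X Y where XY: "X \<in> \<C>" "Y \<in> \<C>" "x \<in> X" "y \<in> Y" by blast
  with assms(2) chain[OF XY(1,2)] have "x + y \<in> X \<or> x + y \<in> Y"
    by (meson ideal_add subsetD)
  with XY show "x + y \<in> \<Union>\<C>" by blast
next
  fix a x assume "x \<in> \<Union>\<C>"
  then obtain X where "X \<in> \<C>" "x \<in> X" by blast
  with assms(2) have "a * x \<in> X" by (simp add: ideal_mult_left)
  with \<open>X \<in> \<C>\<close> show "a * x \<in> \<Union>\<C>" by blast
qed

lemma proper_ideal_subset_prime_ideal:
  assumes "ideal I" "1 \<notin> I"
  shows "\<exists>P. prime_ideal P \<and> I \<subseteq> P"
proof -
  define \<A> where "\<A> = {J. ideal J \<and> I \<subseteq> J \<and> 1 \<notin> J}"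
  have "\<exists>M\<in>\<A>. \<forall>J\<in>\<A>. M \<subseteq> J \<longrightarrow> J = M"
  proof (rule subset_Zorn_nonempty)
    show "\<A> \<noteq> {}" using assms by (auto simp: \<A>_def)
  next
    fix \<C> assume "\<C> \<noteq> {}" "subset.chain \<A> \<C>"
    then have \<C>: "\<C> \<subseteq> \<A>" "\<And>X Y. X \<in> \<C> \<Longrightarrow> Y \<in> \<C> \<Longrightarrow> X \<subseteq> Y \<or> Y \<subseteq> X"
      by (auto simp: subset_chain_def)
    have "ideal (\<Union>\<C>)"
    proof (rule ideal_Union_chain)
      show "ideal J" if "J \<in> \<C>" for J using that \<C>(1) by (auto simp: \<A>_def)
    qed (use \<open>\<C> \<noteq> {}\<close> \<C>(2) in blast)+
    with \<open>\<C> \<noteq> {}\<close> \<C>(1) show "\<Union>\<C> \<in> \<A>" by (auto simp: \<A>_def)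
  qed
  then obtain M where M: "ideal M" "I \<subseteq> M" "1 \<notin> M"
    and maximal: "\<And>J. J \<in> \<A> \<Longrightarrow> M \<subseteq> J \<Longrightarrow> J = M"
    by (auto simp: \<A>_def)
  have "prime_ideal M"
  proof (rule maximal_proper_ideal_is_prime[OF M(1,3)])
    fix J assume "ideal J" "M \<subseteq> J" "1 \<notin> J"
    with M(2) have "J \<in> \<A>" by (auto simp: \<A>_def)
    from this \<open>M \<subseteq> J\<close> show "J = M" by (rule maximal)
  qed
  with \<open>I \<subseteq> M\<close> show ?thesis by blast
qed

lemma finite_maximal_antichain_cover:
  fixes A :: "'a::order set"
  assumes "finite A"
  obtains S where "S \<subseteq> A" "\<And>x y. x \<in> S \<Longrightarrow> y \<in> S \<Longrightarrow> x \<le> y \<Longrightarrow> x = y"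
    "\<And>a. a \<in> A \<Longrightarrow> \<exists>m\<in>S. a \<le> m"
proof
  let ?S = "{m \<in> A. \<forall>b\<in>A. m \<le> b \<longrightarrow> m = b}"
  show "?S \<subseteq> A" "\<And>x y. x \<in> ?S \<Longrightarrow> y \<in> ?S \<Longrightarrow> x \<le> y \<Longrightarrow> x = y" by auto
  show "\<exists>m\<in>?S. a \<le> m" if "a \<in> A" for a
    using finite_has_maximal2[OF assms that] by blast
qed

context module
begin

text \<open>For a prime \<open>P\<close> and an ideal \<open>I\<close>, \<open>v \<in> localized_multiples P I x\<close> says that
\<open>v/1 \<in> I\<^sub>P \<cdot> x/1\<close> in the localization \<open>L\<^sub>P\<close>.\<close>

definition localized_multiples :: "'a set \<Rightarrow> 'a set \<Rightarrow> 'b \<Rightarrow> 'b set" where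
  "localized_multiples P I x = {v. \<exists>t a. t \<notin> P \<and> a \<in> I \<and> t *s v = a *s x}"

definition generates_localization :: "'a set \<Rightarrow> 'b \<Rightarrow> bool" where
  "generates_localization P x \<longleftrightarrow> (\<forall>v. v \<in> localized_multiples P UNIV x)"

lemma subspace_localized_multiples:
  assumes "prime_ideal P" "ideal I"
  shows "subspace (localized_multiples P I x)"
  unfolding subspace_def localized_multiples_def
proof (intro conjI ballI allI CollectI)
  have "1 \<notin> P \<and> 0 \<in> I \<and> 1 *s 0 = 0 *s x"
    using assms by (simp add: prime_ideal_iff ideal_def)
  then show "\<exists>t a. t \<notin> P \<and> a \<in> I \<and> t *s 0 = a *s x" by blast
next
  fix v w assume "v \<in> {v. \<exists>t a. t \<notin> P \<and> a \<in> I \<and> t *s v = a *s x}"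
    "w \<in> {v. \<exists>t a. t \<notin> P \<and> a \<in> I \<and> t *s v = a *s x}"
  then obtain t a s b where ta: "t \<notin> P" "a \<in> I" "t *s v = a *s x"
    and sb: "s \<notin> P" "b \<in> I" "s *s w = b *s x"
    by blast
  have "(s * t) *s (v + w) = s *s (t *s v) + t *s (s *s w)"
    by (simp add: scale_right_distrib mult.commute)
  also have "\<dots> = (s * a + t * b) *s x"
    by (simp add: ta(3) sb(3) scale_left_distrib)
  finally have "s * t \<notin> P \<and> s * a + t * b \<in> I \<and> (s * t) *s (v + w) = (s * a + t * b) *s x"
    using assms ta sb by (simp add: prime_ideal_mult_notin ideal_mult_left ideal_def)
  then show "\<exists>t a. t \<notin> P \<and> a \<in> I \<and> t *s (v + w) = a *s x" by blast
next
  fix c v assume "v \<in> {v. \<exists>t a. t \<notin> P \<and> a \<in> I \<and> t *s v = a *s x}"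
  then obtain t a where "t \<notin> P" "a \<in> I" "t *s v = a *s x" by blast
  then have "t \<notin> P \<and> c * a \<in> I \<and> t *s (c *s v) = (c * a) *s x"
    using assms(2) by (simp add: ideal_mult_left scale_left_commute flip: scale_scale)
  then show "\<exists>t a. t \<notin> P \<and> a \<in> I \<and> t *s (c *s v) = a *s x" by blast
qed

lemma localized_multiples_scale:
  assumes "ideal I" "c \<in> I" "v \<in> localized_multiples P UNIV x"
  shows "c *s v \<in> localized_multiples P I x"
proof -
  obtain t a where "t \<notin> P" "t *s v = a *s x"
    using assms(3) by (auto simp: localized_multiples_def)
  then have "t \<notin> P \<and> c * a \<in> I \<and> t *s (c *s v) = (c * a) *s x"
    using assms(1,2) by (simp add: ideal_mult_right scale_left_commute flip: scale_scale)
  then show ?thesis by (auto simp: localized_multiples_def)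
qed

lemma localized_multiples_UNIV_trans:
  assumes "prime_ideal P" "v \<in> localized_multiples P UNIV x" "x \<in> localized_multiples P UNIV y"
  shows "v \<in> localized_multiples P UNIV y"
proof -
  obtain t a s b where "t \<notin> P" "t *s v = a *s x" "s \<notin> P" "s *s x = b *s y"
    using assms(2,3) by (auto simp: localized_multiples_def)
  then have "s * t \<notin> P \<and> (s * t) *s v = (a * b) *s y"
    using assms(1) by (simp add: prime_ideal_mult_notin scale_left_commute flip: scale_scale)
  then show ?thesis by (auto simp: localized_multiples_def)
qed

lemma generates_localization_perturb:
  assumes P: "prime_ideal P" and gen: "generates_localization P x"
    and "e \<notin> P" and "m \<in> localized_multiples P P x"
  shows "generates_localization P (e *s x + m)"
proof -
  obtain t a where "t \<notin> P" "a \<in> P" "t *s m = a *s x"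
    using assms(4) by (auto simp: localized_multiples_def)
  then have "t * e + a \<notin> P \<and> (t * e + a) *s x = t *s (e *s x + m)"
    using P \<open>e \<notin> P\<close>
    by (simp add: prime_ideal_mult_notin ideal_add_notin prime_ideal_iff scale_left_distrib
        scale_right_distrib)
  then have "x \<in> localized_multiples P UNIV (e *s x + m)"
    by (auto simp: localized_multiples_def)
  then show ?thesis
    using gen localized_multiples_UNIV_trans[OF P] unfolding generates_localization_def by blast
qed

lemma constant_rank_one_generates_localization:
  assumes "constant_rank_one scale" "prime_ideal P"
  shows "\<exists>x. generates_localization P x"
proof -
  obtain x where x: "\<And>v. \<exists>a u s. u \<notin> P \<and> s \<notin> P \<and> s *s (u *s v - 1 *s (a *s x)) = 0"
    using assms prime_ideal_iff
    unfolding constant_rank_one_def localization_free_rank1_def by metis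
  have "v \<in> localized_multiples P UNIV x" for v
  proof -
    obtain a u s where "u \<notin> P" "s \<notin> P" "s *s (u *s v - 1 *s (a *s x)) = 0"
      using x by blast
    then have "s * u \<notin> P \<and> (s * u) *s v = (s * a) *s x"
      using assms(2) by (simp add: prime_ideal_mult_notin scale_right_diff_distrib)
    then show ?thesis by (auto simp: localized_multiples_def)
  qed
  then show ?thesis unfolding generates_localization_def by blast
qed

lemma common_localization_generator:
  assumes "finite S" and prime: "\<And>P. P \<in> S \<Longrightarrow> prime_ideal P"
    and antichain: "\<And>P Q. P \<in> S \<Longrightarrow> Q \<in> S \<Longrightarrow> P \<subseteq> Q \<Longrightarrow> P = Q"
    and local_gen: "\<And>P. P \<in> S \<Longrightarrow> \<exists>x. generates_localization P x"
  shows "\<exists>z. \<forall>P\<in>S. generates_localization P z"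
proof -
  obtain x where x: "\<And>P. P \<in> S \<Longrightarrow> generates_localization P (x P)"
    using local_gen by metis
  have "\<forall>P\<in>S. \<exists>e. e \<notin> P \<and> (\<forall>Q\<in>S - {P}. e \<in> Q)"
  proof
    fix P assume P: "P \<in> S"
    have "\<not> \<Inter>(S - {P}) \<subseteq> P"
    proof (rule Inter_not_subset_prime_ideal)
      show "prime_ideal P" "finite (S - {P})" using prime[OF P] \<open>finite S\<close> by auto
      show "ideal Q \<and> \<not> Q \<subseteq> P" if Q: "Q \<in> S - {P}" for Q
        using prime_ideal_imp_ideal[OF prime] antichain[of Q P] P Q by blast
    qed
    then show "\<exists>e. e \<notin> P \<and> (\<forall>Q\<in>S - {P}. e \<in> Q)" by blast
  qed
  from bchoice[OF this] obtain e where e: "\<forall>P\<in>S. e P \<notin> P \<and> (\<forall>Q\<in>S - {P}. e P \<in> Q)" ..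
  have "generates_localization P (\<Sum>Q\<in>S. e Q *s x Q)" if P: "P \<in> S" for P
  proof -
    have "(\<Sum>Q\<in>S - {P}. e Q *s x Q) \<in> localized_multiples P P (x P)"
    proof (rule subspace_sum[OF subspace_localized_multiples])
      fix Q assume "Q \<in> S - {P}"
      then have "e Q \<in> P" using e P by blast
      then show "e Q *s x Q \<in> localized_multiples P P (x P)"
        by (rule localized_multiples_scale[OF prime_ideal_imp_ideal[OF prime[OF P]]]) (use x[OF P] in \<open>simp add: generates_localization_def\<close>)
    qed (use prime[OF P] prime_ideal_imp_ideal in auto)
    then have "generates_localization P (e P *s x P + (\<Sum>Q\<in>S - {P}. e Q *s x Q))"
      using generates_localization_perturb[OF prime[OF P] x[OF P]] e P by blast
    then show ?thesis
      using \<open>finite S\<close> P by (simp add: sum.remove)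
  qed
  then show ?thesis by blast
qed

lemma constant_rank_one_generator_above_primes:
  assumes "constant_rank_one scale" "finite F" "\<And>Q. Q \<in> F \<Longrightarrow> prime_ideal Q"
  shows "\<exists>z. \<forall>Q\<in>F. \<exists>P. Q \<subseteq> P \<and> generates_localization P z"
proof -
  obtain S where S: "S \<subseteq> F" "\<And>P P'. P \<in> S \<Longrightarrow> P' \<in> S \<Longrightarrow> P \<subseteq> P' \<Longrightarrow> P = P'"
    "\<And>Q. Q \<in> F \<Longrightarrow> \<exists>P\<in>S. Q \<subseteq> P"
    using assms(2) by (rule finite_maximal_antichain_cover) blast
  have "finite S" using S(1) assms(2) by (rule finite_subset)
  moreover have S_prime: "prime_ideal P" if "P \<in> S" for P
    using that S(1) assms(3) by blast
  ultimately have "\<exists>z. \<forall>P\<in>S. generates_localization P z"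
    using S(2) constant_rank_one_generates_localization[OF assms(1) S_prime]
    by (rule common_localization_generator)
  then obtain z where z: "\<forall>P\<in>S. generates_localization P z" ..
  have "\<exists>P. Q \<subseteq> P \<and> generates_localization P z" if Q: "Q \<in> F" for Q
  proof -
    obtain P where "P \<in> S" "Q \<subseteq> P" using S(3)[OF Q] by blast
    with z show ?thesis by blast
  qed
  then show ?thesis by blast
qed

lemma colon_ideal_subset_prime_ideal:
  assumes N: "subspace N" and "y \<notin> N"
  shows "\<exists>Q. prime_ideal Q \<and> {a. a *s y \<in> N} \<subseteq> Q"
proof (rule proper_ideal_subset_prime_ideal)
  show "ideal {a. a *s y \<in> N}"
    unfolding ideal_def
  proof (intro conjI ballI allI impI CollectI)
    show "0 *s y \<in> N" using subspace_0[OF N] by simp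
  next
    fix a b assume "a \<in> {a. a *s y \<in> N}" "b \<in> {a. a *s y \<in> N}"
    then show "(a + b) *s y \<in> N" using subspace_add[OF N] by (simp add: scale_left_distrib)
  next
    fix c a assume "a \<in> {a. a *s y \<in> N}"
    then have "c *s (a *s y) \<in> N" using subspace_scale[OF N] by blast
    then show "(c * a) *s y \<in> N" by simp
  qed
  show "1 \<notin> {a. a *s y \<in> N}" using \<open>y \<notin> N\<close> by simp
qed

text \<open>If \<open>z \<in> N\<close> generates \<open>L\<^sub>P\<close>, then \<open>y/1 \<in> N\<^sub>P\<close>, i.e. \<open>t y \<in> N\<close> for some \<open>t \<notin> P\<close>.\<close>

lemma generates_localization_colon_ideal_not_subset:
  assumes "subspace N" "z \<in> N" "generates_localization P z"
  shows "\<not> {a. a *s y \<in> N} \<subseteq> P"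
proof -
  have "y \<in> localized_multiples P UNIV z" using assms(3) unfolding generates_localization_def ..
  then obtain t a where "t \<notin> P" "t *s y = a *s z"
    by (auto simp: localized_multiples_def)
  moreover have "a *s z \<in> N" using subspace_scale[OF assms(1,2)] .
  ultimately have "t \<in> {a. a *s y \<in> N}" by simp
  with \<open>t \<notin> P\<close> show ?thesis by blast
qed

end

theorem corollary4p10:
  fixes scale :: "'a::comm_ring_1 \<Rightarrow> 'b::ab_group_add \<Rightarrow> 'b"
    and Ls :: "nat \<Rightarrow> 'b set" and n :: nat
  assumes "module scale"
    and "fg_projective scale"
    and "constant_rank_one scale"
    and "\<And>k. k \<in> {1..n} \<Longrightarrow> module.subspace scale (Ls k)"
    and "(\<Union>k\<in>{1..n}. Ls k) = UNIV"
  shows "\<exists>k\<in>{1..n}. Ls k = UNIV"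
proof (rule ccontr)
  interpret module scale by fact
  assume "\<not> ?thesis"
  then have "\<forall>k\<in>{1..n}. \<exists>y. y \<notin> Ls k" by blast
  from bchoice[OF this] obtain y where y: "\<forall>k\<in>{1..n}. y k \<notin> Ls k" ..
  have "\<forall>k\<in>{1..n}. \<exists>Q. prime_ideal Q \<and> {a. scale a (y k) \<in> Ls k} \<subseteq> Q"
    using colon_ideal_subset_prime_ideal[OF assms(4)] y by blast
  from bchoice[OF this] obtain Q
    where Q: "\<forall>k\<in>{1..n}. prime_ideal (Q k) \<and> {a. scale a (y k) \<in> Ls k} \<subseteq> Q k" ..
  have "\<exists>z. \<forall>Q'\<in>Q ` {1..n}. \<exists>P. Q' \<subseteq> P \<and> generates_localization P z"
    using Q by (intro constant_rank_one_generator_above_primes assms(3)) auto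
  then obtain z where z: "\<forall>k\<in>{1..n}. \<exists>P. Q k \<subseteq> P \<and> generates_localization P z" by blast
  obtain k where k: "k \<in> {1..n}" "z \<in> Ls k" using assms(5) by blast
  with z obtain P where "Q k \<subseteq> P" and gen: "generates_localization P z" by blast
  moreover have "\<not> {a. scale a (y k) \<in> Ls k} \<subseteq> P"
    using generates_localization_colon_ideal_not_subset[OF assms(4)[OF k(1)] k(2) gen] .
  ultimately show False using Q k(1) by blast
qed

end
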